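(* Let $\dot x=f(x)+\sum_{i=1}^m g_i(x)u_i$ with $m\ge2$, let $h:\mathbb{R}^n\to\mathbb{R}$ have relative degree $r$ at $x$, and let $\xi=[h,L_fh,\dots,L_f^{r-1}h]^\top$. Let $G=\mathrm{span}\{g_1(x),\dots,g_m(x)\}$, $G^\perp$ its annihilator, and $\Xi=\mathrm{span}\{d\xi_1(x),\dots,d\xi_r(x)\}$. If $g_1(x),\dots,g_m(x)$ are linearly independent, then there always exists a nonzero $q\in\mathbb{R}^n$ such that $q\perp G^\perp$ and $q\perp\Xi$, i.e., $\omega q=0$ for every covector $\omega\in G^\perp\cup\Xi$.
   Context: $h$ has relative degree $r$ at $x$ if for all $i$ and $k=0,\dots,r-2$, $L_{g_i}L_f^kh\equiv0$ on an open set around $x$, and $[L_{g_1}L_f^{r-1}h(x),\dots,L_{g_m}L_f^{r-1}h(x)]$ has a nonzero entry. *)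

theory Defs
  imports "HOL-Analysis.Analysis"
begin

definition lie :: "(real^'n \<Rightarrow> real^'n) \<Rightarrow> (real^'n \<Rightarrow> real) \<Rightarrow> real^'n \<Rightarrow> real" where
  "lie v h = (\<lambda>y. frechet_derivative h (at y) (v y))"

text \<open>Smoothness surrogate: h and all its iterated Lie derivatives along any finite
  word of the vector fields f, g_0, ..., g_(m-1) are differentiable everywhere; the
  vector fields themselves are differentiable everywhere.\<close>
definition lie_smooth ::
  "(real^'n \<Rightarrow> real^'n) \<Rightarrow> (nat \<Rightarrow> real^'n \<Rightarrow> real^'n) \<Rightarrow> nat \<Rightarrow> (real^'n \<Rightarrow> real) \<Rightarrow> bool" where
  "lie_smooth f g m h \<longleftrightarrow>
     (\<forall>y. f differentiable (at y)) \<and> (\<forall>i<m. \<forall>y. g i differentiable (at y)) \<and>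
     (\<forall>ws. set ws \<subseteq> insert f (g ` {..<m}) \<longrightarrow>
        (\<forall>y. foldr lie ws h differentiable (at y)))"

definition relative_degree ::
  "(real^'n \<Rightarrow> real^'n) \<Rightarrow> (nat \<Rightarrow> real^'n \<Rightarrow> real^'n) \<Rightarrow> nat \<Rightarrow> (real^'n \<Rightarrow> real) \<Rightarrow> nat \<Rightarrow> real^'n \<Rightarrow> bool" where
  "relative_degree f g m h r x \<longleftrightarrow>
     r \<ge> 1 \<and>
     (\<exists>U. open U \<and> x \<in> U \<and>
        (\<forall>i<m. \<forall>k. k + 2 \<le> r \<longrightarrow> (\<forall>y\<in>U. lie (g i) ((lie f ^^ k) h) y = 0))) \<and>
     (\<exists>i<m. lie (g i) ((lie f ^^ (r - 1)) h) x \<noteq> 0)"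

text \<open>xi_k = L_f^(k-1) h, k = 1..r (indexed here by k < r as L_f^k h).\<close>
definition xi :: "(real^'n \<Rightarrow> real^'n) \<Rightarrow> (real^'n \<Rightarrow> real) \<Rightarrow> nat \<Rightarrow> real^'n \<Rightarrow> real" where
  "xi f h k = (lie f ^^ k) h"

definition annihilator :: "(real^'n) set \<Rightarrow> (real^'n \<Rightarrow> real) set" where
  "annihilator G = {\<omega>. linear \<omega> \<and> (\<forall>v\<in>G. \<omega> v = 0)}"

definition covec_span :: "(nat \<Rightarrow> ('a::real_vector \<Rightarrow> real)) \<Rightarrow> nat \<Rightarrow> ('a \<Rightarrow> real) set" where
  "covec_span w r = {\<lambda>v. \<Sum>k<r. c k * w k v | c. True}"

end

theory Submission
  imports Defs
begin

text \<open>Let \<open>D\<^sub>k\<close> be the derivative of \<open>L\<^sub>f\<^sup>k h\<close> at \<open>x\<close>. By the relative degree condition,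
  \<open>D\<^sub>k\<close> annihilates every \<open>g\<^sub>i(x)\<close> for \<open>k < r - 1\<close>, so among the covectors \<open>d\<xi>\<^sub>k\<close> only
  \<open>D\<^bsub>r-1\<^esub>\<close> imposes a condition on \<open>G\<close>. A single linear functional has a nontrivial kernel on
  the plane spanned by the independent vectors \<open>g\<^sub>0(x)\<close> and \<open>g\<^sub>1(x)\<close>; a nonzero \<open>q\<close> in that
  kernel lies in \<open>G\<close>, hence is annihilated by \<open>G\<^sup>\<perp>\<close>, and is annihilated by every \<open>D\<^sub>k\<close>.\<close>

lemma foldr_lie_replicate: "foldr lie (replicate k f) h = (lie f ^^ k) h"
  by (induction k) auto

lemma linear_frechet_derivative_lie_iterate:
  assumes "lie_smooth f g m h"
  shows "linear (frechet_derivative ((lie f ^^ k) h) (at y))"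
proof -
  have "set (replicate k f) \<subseteq> insert f (g ` {..<m})" by auto
  then have "foldr lie (replicate k f) h differentiable (at y)"
    using assms unfolding lie_smooth_def by blast
  then show ?thesis
    by (simp add: foldr_lie_replicate frechet_derivative_works has_derivative_linear)
qed

lemma relative_degree_derivative_vanishes:
  assumes "relative_degree f g m h r x" "i < m" "k + 2 \<le> r"
  shows "frechet_derivative ((lie f ^^ k) h) (at x) (g i x) = 0"
  using assms unfolding relative_degree_def lie_def by blast

lemma kernel_meets_span_pair:
  fixes \<phi> :: "'a::real_vector \<Rightarrow> real"
  assumes "linear \<phi>" "independent {u, v}" "u \<noteq> v"
  obtains q where "q \<in> span {u, v}" "q \<noteq> 0" "\<phi> q = 0"
proof (cases "\<phi> u = 0")
  case True
  moreover have "u \<noteq> 0" using assms(2) dependent_zero by blast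
  ultimately show ?thesis using that span_base by blast
next
  case False
  define q where "q = \<phi> v *\<^sub>R u - \<phi> u *\<^sub>R v"
  have "q \<in> span {u, v}"
    unfolding q_def by (intro span_diff span_scale span_base) auto
  moreover have "\<phi> q = 0"
    using assms(1) by (simp add: q_def linear_diff linear_scale)
  moreover have "q \<noteq> 0"
  proof
    assume "q = 0"
    then have "\<phi> u *\<^sub>R v = \<phi> v *\<^sub>R u" by (simp add: q_def)
    then have "v = (\<phi> v / \<phi> u) *\<^sub>R u"
      using False by (metis divide_inverse_commute scaleR_scaleR scaleR_left_imp_eq
        right_inverse scaleR_one)
    then have "v \<in> span {u}" by (metis span_base span_scale singletonI)
    moreover have "independent {v, u}" using assms(2) by (simp add: insert_commute)
    ultimately show False using assms(3) by (simp add: independent_insert)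
  qed
  ultimately show ?thesis using that by blast
qed

lemma annihilator_span_vanishes:
  assumes "\<omega> \<in> annihilator (span G)" "q \<in> span G"
  shows "\<omega> q = 0"
  using assms unfolding annihilator_def by blast

lemma covec_span_vanishes:
  assumes "\<omega> \<in> covec_span w r" "\<And>k. k < r \<Longrightarrow> w k q = 0"
  shows "\<omega> q = 0"
  using assms unfolding covec_span_def by auto

theorem lemma6:
  fixes f :: "real^'n \<Rightarrow> real^'n" and g :: "nat \<Rightarrow> real^'n \<Rightarrow> real^'n"
    and h :: "real^'n \<Rightarrow> real" and m r :: nat and x :: "real^'n"
  assumes "m \<ge> 2"
    and "lie_smooth f g m h"
    and "relative_degree f g m h r x"
    and "inj_on (\<lambda>i. g i x) {..<m}"
    and "independent ((\<lambda>i. g i x) ` {..<m})"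
  shows "\<exists>q::real^'n. q \<noteq> 0 \<and>
           (\<forall>\<omega> \<in> annihilator (span ((\<lambda>i. g i x) ` {..<m})). \<omega> q = 0) \<and>
           (\<forall>\<omega> \<in> covec_span (\<lambda>k. frechet_derivative (xi f h k) (at x)) r. \<omega> q = 0)"
proof -
  define D where "D k = frechet_derivative ((lie f ^^ k) h) (at x)" for k
  have pair: "{g 0 x, g 1 x} \<subseteq> (\<lambda>i. g i x) ` {..<m}" using assms(1) by auto
  have "g 0 x \<noteq> g 1 x" using assms(1,4) unfolding inj_on_def by fastforce
  then obtain q where q: "q \<in> span {g 0 x, g 1 x}" "q \<noteq> 0" "D (r - 1) q = 0"
    using kernel_meets_span_pair linear_frechet_derivative_lie_iterate[OF assms(2)]
      independent_mono[OF assms(5) pair] unfolding D_def by metis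
  have "D k q = 0" if "k < r" for k
  proof (cases "k + 2 \<le> r")
    case True
    then have "\<forall>v \<in> {g 0 x, g 1 x}. D k v = 0"
      using relative_degree_derivative_vanishes[OF assms(3)] assms(1) unfolding D_def by auto
    then show ?thesis
      using linear_eq_0_on_span linear_frechet_derivative_lie_iterate[OF assms(2)] q(1)
      unfolding D_def by blast
  next
    case False
    with that have "k = r - 1" by simp
    with q(3) show ?thesis by simp
  qed
  moreover have "q \<in> span ((\<lambda>i. g i x) ` {..<m})" using q(1) span_mono[OF pair] by blast
  ultimately show ?thesis
    using q(2) annihilator_span_vanishes covec_span_vanishes[where w = D]
    unfolding D_def xi_def by blast
qed

end
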